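(* Let $m>0$ and let $U:[0,\infty)\to\mathbb{R}$ satisfy: $U\in C^{2}((0,\infty))\cap C^{1}([0,\infty))$, $U(0)=0$, $U'(q)>0$ for all $q>0$, and for each $E>0$ there is a unique $q_{\max}(E)>0$ with $U(q_{\max}(E))=E$. Consider trajectories $q(t)\ge 0$ of the conservative system $m\ddot q+U'(q)=0$, which conserve the energy $E=\frac12 m\dot q^2+U(q)$. Fix arbitrary constants $K>0$ and $M>0$. Define the energy coordinate \[ x(q)=\sqrt{\frac{2U(q)}{K}}, \] and define a reparametrised time $\tau$ along the trajectory by \[ \frac{d\tau}{dt}=\sqrt{\frac{M}{m}}\,\frac{dx}{dq}(q(t)). \] Then along every nontrivial conservative trajectory, $x$ as a function of $\tau$ satisfies \[ M\frac{d^{2}x}{d\tau^{2}}+Kx=0 . \]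
   Context: $q$ is the contact penetration, $m$ the mass, $U$ the contact potential; a nontrivial trajectory is one with energy $E>0$. *)

theory Defs
  imports "HOL-Analysis.Analysis"
begin

definition xcoord :: "real \<Rightarrow> (real \<Rightarrow> real) \<Rightarrow> real \<Rightarrow> real" where
  "xcoord K U s = sqrt (2 * U s / K)"

end

theory Submission
  imports Defs "HOL-Complex_Analysis.Conformal_Mappings"
begin

text \<open>Since \<open>U(0) = 0\<close> and \<open>U' > 0\<close>, the energy coordinate \<open>x(q)\<close> is positive and
  differentiable for \<open>q > 0\<close>, with \<open>K x x' = U'\<close>. A trajectory with \<open>E > 0\<close> never touches
  \<open>q = 0\<close>: there \<open>q\<close> would be minimal, so \<open>q' = 0\<close> and \<open>E = U(0) = 0\<close>. Hence \<open>\<tau>\<close> is a strictly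
  increasing differentiable time change, and in the new time \<open>dx/d\<tau> = sqrt(m/M) q'\<close> and
  \<open>M d\<^sup>2x/d\<tau>\<^sup>2 = m q''/x'(q) = -U'(q)/x'(q) = -K x\<close>.\<close>

lemma has_real_derivative_at_if_within_atLeast:
  fixes f :: "real \<Rightarrow> real"
  assumes "(f has_real_derivative D) (at x within {c..})" "c < x"
  shows "(f has_real_derivative D) (at x)"
proof -
  have "at x within {c..} = at x"
    by (intro at_within_interior) (simp add: \<open>c < x\<close>)
  with assms(1) show ?thesis
    by simp
qed

lemma DERIV_within_atLeast_pos_imp_increasing:
  fixes f f' :: "real \<Rightarrow> real"
  assumes deriv: "\<And>s. s \<ge> c \<Longrightarrow> (f has_real_derivative f' s) (at s within {c..})"
    and pos: "\<And>s. s > c \<Longrightarrow> f' s > 0" and "c \<le> a" "a < b"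
  shows "f a < f b"
proof (rule DERIV_pos_imp_increasing_open[OF \<open>a < b\<close>])
  have "continuous_on {c..} f"
    unfolding continuous_on_eq_continuous_within using deriv by (auto intro: DERIV_continuous)
  then show "continuous_on {a..b} f"
    by (rule continuous_on_subset) (use \<open>c \<le> a\<close> in auto)
  fix x assume "a < x"
  with \<open>c \<le> a\<close> have "x > c"
    by simp
  with deriv[of x] have "(f has_real_derivative f' x) (at x)"
    by (simp add: has_real_derivative_at_if_within_atLeast)
  with pos[OF \<open>x > c\<close>] show "\<exists>y. (f has_real_derivative y) (at x) \<and> 0 < y"
    by blast
qed

lemma DERIV_pos_imp_strict_mono_on_interval:
  fixes f f' :: "real \<Rightarrow> real"
  assumes "is_interval I"
    and "\<And>t. t \<in> I \<Longrightarrow> (f has_real_derivative f' t) (at t)"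
    and "\<And>t. t \<in> I \<Longrightarrow> f' t > 0"
  shows "strict_mono_on I f"
proof (rule strict_mono_onI)
  fix a b assume ab: "a \<in> I" "b \<in> I" "a < b"
  show "f a < f b"
  proof (rule DERIV_pos_imp_increasing[OF \<open>a < b\<close>])
    fix x assume "a \<le> x" "x \<le> b"
    with assms(1) ab have "x \<in> I"
      unfolding is_interval_1 by blast
    with assms(2,3) show "\<exists>y. (f has_real_derivative y) (at x) \<and> 0 < y"
      by blast
  qed
qed

lemma DERIV_min_on_open_imp_zero:
  fixes f :: "real \<Rightarrow> real"
  assumes "open S" "t \<in> S" "(f has_real_derivative d) (at t)"
    and "\<And>s. s \<in> S \<Longrightarrow> f t \<le> f s"
  shows "d = 0"
proof -
  obtain e where "e > 0" "ball t e \<subseteq> S"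
    using assms(1,2) openE by blast
  with assms(4) show ?thesis
    by (intro DERIV_local_min[OF assms(3) \<open>e > 0\<close>]) (auto simp: dist_real_def subset_iff)
qed

lemma xcoord_has_real_derivative:
  assumes "K > 0" "U s > 0" "(U has_real_derivative u) (at s)"
  shows "(xcoord K U has_real_derivative u / (K * xcoord K U s)) (at s)"
proof -
  have "2 * U s / K > 0"
    using assms(1,2) by simp
  then have "((\<lambda>s. sqrt (2 * U s / K)) has_real_derivative
               inverse (sqrt (2 * U s / K)) / 2 * (2 * u / K)) (at s)"
    using assms(3) by (auto intro!: derivative_eq_intros)
  moreover have "inverse (sqrt (2 * U s / K)) / 2 * (2 * u / K) = u / (K * xcoord K U s)"
    using assms(1) by (simp add: xcoord_def field_simps)
  ultimately show ?thesis
    by (simp add: xcoord_def[abs_def])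
qed

locale time_change =
  fixes I :: "real set" and \<tau> T :: "real \<Rightarrow> real"
  assumes open_I: "open I" and interval_I: "is_interval I"
    and \<tau>_deriv: "\<And>t. t \<in> I \<Longrightarrow> (\<tau> has_real_derivative T t) (at t)"
    and T_pos: "\<And>t. t \<in> I \<Longrightarrow> T t > 0"
begin

lemma strict_mono_on_\<tau>: "strict_mono_on I \<tau>"
  using interval_I \<tau>_deriv T_pos by (rule DERIV_pos_imp_strict_mono_on_interval)

lemma continuous_on_\<tau>: "continuous_on I \<tau>"
  using \<tau>_deriv by (intro continuous_at_imp_continuous_on ballI DERIV_isCont)

lemma inv_into_\<tau>: "t \<in> I \<Longrightarrow> inv_into I \<tau> (\<tau> t) = t"
  using strict_mono_on_imp_inj_on[OF strict_mono_on_\<tau>] by simp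

lemma open_image_\<tau>: "open (\<tau> ` I)"
  by (rule invariance_of_domain[OF continuous_on_\<tau> open_I
        strict_mono_on_imp_inj_on[OF strict_mono_on_\<tau>]])

lemma has_real_derivative_comp_inv_into:
  assumes "t \<in> I" "(h has_real_derivative h') (at t)"
  shows "((\<lambda>r. h (inv_into I \<tau> r)) has_real_derivative h' / T t) (at (\<tau> t))"
proof -
  have g: "(inv_into I \<tau> has_real_derivative inverse (T t)) (at (\<tau> t))"
    using T_pos[OF assms(1)]
    by (intro has_field_derivative_inverse_strong[OF \<tau>_deriv _ open_I _ continuous_on_\<tau>])
       (auto simp: assms(1) inv_into_\<tau>)
  have "(h has_real_derivative h') (at (inv_into I \<tau> (\<tau> t)))"
    using assms by (simp add: inv_into_\<tau>)
  from DERIV_chain2[OF this g] show ?thesis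
    by (simp add: divide_inverse)
qed

lemma second_derivative_comp_inv_into:
  assumes h: "\<And>t. t \<in> I \<Longrightarrow> (h has_real_derivative v t * T t) (at t)"
    and v: "\<And>t. t \<in> I \<Longrightarrow> (v has_real_derivative a t * T t) (at t)"
    and "t \<in> I"
  defines "X \<equiv> \<lambda>r. h (inv_into I \<tau> r)"
  shows "X differentiable (at (\<tau> t))" "deriv X differentiable (at (\<tau> t))"
    and "deriv (deriv X) (\<tau> t) = a t"
proof -
  have X: "(X has_real_derivative v s) (at (\<tau> s))" if "s \<in> I" for s
    using has_real_derivative_comp_inv_into[OF that h[OF that]] T_pos[OF that]
    by (simp add: X_def)
  have deriv_X: "deriv X r = v (inv_into I \<tau> r)" if "r \<in> \<tau> ` I" for r
    using that X[THEN DERIV_imp_deriv] inv_into_\<tau> by auto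
  have "((\<lambda>r. v (inv_into I \<tau> r)) has_real_derivative a t) (at (\<tau> t))"
    using has_real_derivative_comp_inv_into[OF \<open>t \<in> I\<close> v[OF \<open>t \<in> I\<close>]] T_pos[OF \<open>t \<in> I\<close>]
    by simp
  then have X': "(deriv X has_real_derivative a t) (at (\<tau> t))"
    by (rule has_field_derivative_transform_within_open[OF _ open_image_\<tau>])
       (use \<open>t \<in> I\<close> deriv_X in auto)
  show "X differentiable (at (\<tau> t))"
    using X[OF \<open>t \<in> I\<close>] real_differentiable_def by blast
  show "deriv X differentiable (at (\<tau> t))"
    using X' real_differentiable_def by blast
  show "deriv (deriv X) (\<tau> t) = a t"
    using X' by (rule DERIV_imp_deriv)
qed

end

locale conservative_motion =
  fixes m K M E :: real and U U' :: "real \<Rightarrow> real"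
    and I :: "real set" and q q' q'' :: "real \<Rightarrow> real"
  assumes m_pos: "m > 0" and K_pos: "K > 0" and M_pos: "M > 0"
    and U_deriv_within: "\<And>s. s \<ge> 0 \<Longrightarrow> (U has_real_derivative U' s) (at s within {0..})"
    and U0: "U 0 = 0" and U'_pos: "\<And>s. s > 0 \<Longrightarrow> U' s > 0"
    and open_I: "open I" and interval_I: "is_interval I"
    and q_deriv: "\<And>t. t \<in> I \<Longrightarrow> (q has_real_derivative q' t) (at t)"
    and q'_deriv: "\<And>t. t \<in> I \<Longrightarrow> (q' has_real_derivative q'' t) (at t)"
    and q_nonneg: "\<And>t. t \<in> I \<Longrightarrow> q t \<ge> 0"
    and motion: "\<And>t. t \<in> I \<Longrightarrow> m * q'' t + U' (q t) = 0"
    and energy: "\<And>t. t \<in> I \<Longrightarrow> m * (q' t)\<^sup>2 / 2 + U (q t) = E"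
    and E_pos: "E > 0"
begin

definition dxcoord :: "real \<Rightarrow> real" where
  "dxcoord s = U' s / (K * xcoord K U s)"

lemma U_pos:
  assumes "s > 0"
  shows "U s > 0"
  using DERIV_within_atLeast_pos_imp_increasing[OF U_deriv_within U'_pos order.refl assms] U0
  by simp

lemma U_deriv:
  assumes "s > 0"
  shows "(U has_real_derivative U' s) (at s)"
  using assms U_deriv_within[of s] by (simp add: has_real_derivative_at_if_within_atLeast)

lemma xcoord_pos:
  assumes "s > 0"
  shows "xcoord K U s > 0"
  using U_pos[OF assms] K_pos by (simp add: xcoord_def)

lemma dxcoord_pos:
  assumes "s > 0"
  shows "dxcoord s > 0"
  using xcoord_pos[OF assms] U'_pos[OF assms] K_pos by (simp add: dxcoord_def)

lemma xcoord_has_derivative_dxcoord: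
  assumes "s > 0"
  shows "(xcoord K U has_real_derivative dxcoord s) (at s)"
  unfolding dxcoord_def by (rule xcoord_has_real_derivative[OF K_pos U_pos[OF assms] U_deriv[OF assms]])

lemma q_pos:
  assumes "t \<in> I"
  shows "q t > 0"
proof (rule ccontr)
  assume "\<not> q t > 0"
  with q_nonneg[OF assms] have "q t = 0"
    by simp
  with q_nonneg have "\<And>s. s \<in> I \<Longrightarrow> q t \<le> q s"
    by simp
  with DERIV_min_on_open_imp_zero[OF open_I assms q_deriv[OF assms]] have "q' t = 0"
    by blast
  with energy[OF assms] \<open>q t = 0\<close> U0 E_pos show False
    by simp
qed

lemma harmonic_in_new_time:
  assumes \<tau>_deriv: "\<And>t. t \<in> I \<Longrightarrow> (\<tau> has_real_derivative sqrt (M / m) * dxcoord (q t)) (at t)"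
    and "t \<in> I"
  defines "X \<equiv> \<lambda>r. xcoord K U (q (inv_into I \<tau> r))"
  shows "X differentiable (at (\<tau> t))" "deriv X differentiable (at (\<tau> t))"
    and "M * deriv (deriv X) (\<tau> t) + K * X (\<tau> t) = 0"
proof -
  define c where "c = sqrt (M / m)"
  have "c > 0" and c_square: "c\<^sup>2 = M / m"
    using m_pos M_pos by (simp_all add: c_def)
  have "(\<tau> has_real_derivative c * dxcoord (q s)) (at s)" "c * dxcoord (q s) > 0" if "s \<in> I" for s
    using \<tau>_deriv[OF that] dxcoord_pos[OF q_pos[OF that]] \<open>c > 0\<close> by (simp_all add: c_def)
  with open_I interval_I interpret time_change I \<tau> "\<lambda>s. c * dxcoord (q s)"
    by (simp add: time_change_def)
  have x_of_q: "((\<lambda>s. xcoord K U (q s)) has_real_derivative q' s / c * (c * dxcoord (q s))) (at s)"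
    if "s \<in> I" for s
  proof -
    have "q' s / c * (c * dxcoord (q s)) = dxcoord (q s) * q' s"
      using \<open>c > 0\<close> by simp
    with DERIV_chain2[OF xcoord_has_derivative_dxcoord[OF q_pos[OF that]] q_deriv[OF that]]
    show ?thesis
      by simp
  qed
  have velocity: "((\<lambda>s. q' s / c) has_real_derivative
      q'' s / c\<^sup>2 / dxcoord (q s) * (c * dxcoord (q s))) (at s)" if "s \<in> I" for s
  proof -
    have "q'' s / c\<^sup>2 / dxcoord (q s) * (c * dxcoord (q s)) = q'' s / c"
      using dxcoord_pos[OF q_pos[OF that]] \<open>c > 0\<close> by (simp add: field_simps power2_eq_square)
    with DERIV_cdivide[OF q'_deriv[OF that]] show ?thesis
      by simp
  qed
  note X = second_derivative_comp_inv_into[OF x_of_q velocity \<open>t \<in> I\<close>]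
  show "X differentiable (at (\<tau> t))" "deriv X differentiable (at (\<tau> t))"
    using X by (simp_all add: X_def)
  have "q t > 0" and "q'' t = - U' (q t) / m"
    using q_pos[OF \<open>t \<in> I\<close>] motion[OF \<open>t \<in> I\<close>] m_pos by (simp_all add: field_simps)
  then have "M * (q'' t / c\<^sup>2 / dxcoord (q t)) + K * xcoord K U (q t) = 0"
    unfolding c_square dxcoord_def
    using xcoord_pos[OF \<open>q t > 0\<close>] U'_pos[OF \<open>q t > 0\<close>] m_pos M_pos K_pos by (simp add: field_simps)
  with X \<open>t \<in> I\<close> show "M * deriv (deriv X) (\<tau> t) + K * X (\<tau> t) = 0"
    by (simp add: X_def inv_into_\<tau>)
qed

end

theorem theorem2:
  fixes m K M E :: real
    and U U' U'' :: "real \<Rightarrow> real"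
    and I :: "real set"
    and q q' q'' \<tau> :: "real \<Rightarrow> real"
  assumes m_pos: "m > 0" and K_pos: "K > 0" and M_pos: "M > 0"
    \<comment> \<open>U in C^1([0,\<infinity>)) with derivative U'\<close>
    and U_C1: "\<And>s. s \<ge> 0 \<Longrightarrow> (U has_real_derivative U' s) (at s within {0..})"
    and U'_cont: "continuous_on {0..} U'"
    \<comment> \<open>U in C^2((0,\<infinity>)) with second derivative U''\<close>
    and U_C2: "\<And>s. s > 0 \<Longrightarrow> (U' has_real_derivative U'' s) (at s)"
    and U''_cont: "continuous_on {0<..} U''"
    and U0: "U 0 = 0"
    and U'_pos: "\<And>s. s > 0 \<Longrightarrow> U' s > 0"
    and qmax: "\<And>e. e > 0 \<Longrightarrow> \<exists>!qm. qm > 0 \<and> U qm = e"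
    \<comment> \<open>a trajectory of m q'' + U'(q) = 0 on an open time interval I, with q \<ge> 0\<close>
    and I_open: "open I" and I_int: "is_interval I" and I_ne: "I \<noteq> {}"
    and q_d1: "\<And>t. t \<in> I \<Longrightarrow> (q has_real_derivative q' t) (at t)"
    and q_d2: "\<And>t. t \<in> I \<Longrightarrow> (q' has_real_derivative q'' t) (at t)"
    and q_nonneg: "\<And>t. t \<in> I \<Longrightarrow> q t \<ge> 0"
    and eqn: "\<And>t. t \<in> I \<Longrightarrow> m * q'' t + U' (q t) = 0"
    \<comment> \<open>conserved energy E, nontrivial: E > 0\<close>
    and energy: "\<And>t. t \<in> I \<Longrightarrow> m * (q' t)\<^sup>2 / 2 + U (q t) = E"
    and E_pos: "E > 0"
    \<comment> \<open>reparametrised time: d\<tau>/dt = sqrt(M/m) * dx/dq (q(t))\<close>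
    and tau_deriv: "\<And>t. t \<in> I \<Longrightarrow>
        (\<tau> has_real_derivative sqrt (M / m) * deriv (xcoord K U) (q t)) (at t)"
  shows "\<forall>s \<in> \<tau> ` I.
           (let X = (\<lambda>r. xcoord K U (q (inv_into I \<tau> r))) in
              X differentiable (at s) \<and> deriv X differentiable (at s) \<and>
              M * deriv (deriv X) s + K * X s = 0)"
proof -
  interpret conservative_motion m K M E U U' I q q' q''
    using m_pos K_pos M_pos U_C1 U0 U'_pos I_open I_int q_d1 q_d2 q_nonneg eqn energy E_pos
    by (simp add: conservative_motion_def)
  have \<tau>_deriv: "(\<tau> has_real_derivative sqrt (M / m) * dxcoord (q t)) (at t)" if "t \<in> I" for t
    using tau_deriv[OF that] DERIV_imp_deriv[OF xcoord_has_derivative_dxcoord[OF q_pos[OF that]]]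
    by simp
  show ?thesis
  proof
    fix s assume "s \<in> \<tau> ` I"
    then obtain t where "t \<in> I" "s = \<tau> t"
      by blast
    with harmonic_in_new_time[OF \<tau>_deriv] show "let X = (\<lambda>r. xcoord K U (q (inv_into I \<tau> r))) in
        X differentiable (at s) \<and> deriv X differentiable (at s) \<and> M * deriv (deriv X) s + K * X s = 0"
      by (simp add: Let_def)
  qed
qed

end
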